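(* If $V$ is a finite dimensional operator space, then the matrix unit ball of $V$ is operator compact.
   Context: The matrix unit ball of an operator space $V$ is the matrix set $(B_k)_k$ with $B_k$ the closed unit ball of $M_k(V)$. $\mathcal{K}$ denotes the compact operators on $\ell^2$ and $\mathcal{K}(V)=\mathcal{K}\check{\otimes}V$ the operator-space minimal tensor product (completion of $M_\infty(V)$, finitely supported infinite matrices over $V$). $\mathcal{T}$ is the trace class on $\ell^2$ as operator space dual of $\mathcal{K}$, $M_k(\mathcal{T})\cong\mathcal{CB}(\mathcal{K},M_k)$ with norm $\|\cdot\|_{\mathcal{T}}$, $M_\infty\subseteq\mathcal{T}$, and $(\sigma\otimes\mathrm{id})(x)\in M_k(V)$ is the slice map. A matrix set $\boldsymbol{X}=(X_k)$, $X_k\subseteq M_k(V)$, is operator compact if each $X_k$ is closed and there is $x\in\mathcal{K}(V)$ with $X_k\subseteq\overline{\{(\sigma\otimes\mathrm{id})(x):\sigma\in M_k(M_\infty),\|\sigma\|_{\mathcal{T}}\le1\}}$ for all $k$. *)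

theory Defs
  imports "HOL-Analysis.Analysis"
begin

text \<open>Matrices over V (and over the scalars) are represented as functions
  nat => nat => _ ; a k x k matrix is one vanishing outside indices < k.
  Scalars are complex; V is an abstract complex vector space given by a
  scalar multiplication smul, and the operator space structure is given
  abstractly (Ruan) by a family of matrix norms nrm k on M_k(V).\<close>

definition mat_set :: "nat \<Rightarrow> (nat \<Rightarrow> nat \<Rightarrow> 'v::zero) set" where
  "mat_set k = {x. \<forall>i j. (k \<le> i \<or> k \<le> j) \<longrightarrow> x i j = 0}"

definition cmat_norm :: "nat \<Rightarrow> nat \<Rightarrow> (nat \<Rightarrow> nat \<Rightarrow> complex) \<Rightarrow> real" where
  "cmat_norm m n a = Sup {sqrt (\<Sum>i<m. (cmod (\<Sum>j<n. a i j * \<xi> j))^2) | \<xi>.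
                          (\<Sum>j<n. (cmod (\<xi> j))^2) \<le> 1}"

definition mmul :: "(complex \<Rightarrow> 'v \<Rightarrow> 'v) \<Rightarrow> nat \<Rightarrow> nat \<Rightarrow> (nat \<Rightarrow> nat \<Rightarrow> complex)
    \<Rightarrow> (nat \<Rightarrow> nat \<Rightarrow> 'v::ab_group_add) \<Rightarrow> (nat \<Rightarrow> nat \<Rightarrow> complex) \<Rightarrow> (nat \<Rightarrow> nat \<Rightarrow> 'v)" where
  "mmul smul m n \<alpha> x \<beta> = (\<lambda>i j. if i < m \<and> j < m
      then (\<Sum>p<n. \<Sum>q<n. smul (\<alpha> i p * \<beta> q j) (x p q)) else 0)"

definition dsum :: "nat \<Rightarrow> nat \<Rightarrow> (nat \<Rightarrow> nat \<Rightarrow> 'v::zero) \<Rightarrow> (nat \<Rightarrow> nat \<Rightarrow> 'v) \<Rightarrow> (nat \<Rightarrow> nat \<Rightarrow> 'v)" where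
  "dsum n m x y = (\<lambda>i j. if i < n \<and> j < n then x i j
      else if n \<le> i \<and> n \<le> j \<and> i < n + m \<and> j < n + m then y (i - n) (j - n) else 0)"

definition operator_space :: "(complex \<Rightarrow> 'v::ab_group_add \<Rightarrow> 'v) \<Rightarrow> (nat \<Rightarrow> (nat \<Rightarrow> nat \<Rightarrow> 'v) \<Rightarrow> real) \<Rightarrow> bool" where
  "operator_space smul nrm \<longleftrightarrow>
     vector_space smul \<and>
     (\<forall>k. \<forall>x\<in>mat_set k. 0 \<le> nrm k x \<and> (nrm k x = 0 \<longleftrightarrow> x = (\<lambda>i j. 0))) \<and>
     (\<forall>k. \<forall>x\<in>mat_set k. \<forall>y\<in>mat_set k. nrm k (\<lambda>i j. x i j + y i j) \<le> nrm k x + nrm k y) \<and>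
     (\<forall>k c. \<forall>x\<in>mat_set k. nrm k (\<lambda>i j. smul c (x i j)) = cmod c * nrm k x) \<and>
     (\<forall>m n \<alpha> \<beta>. \<forall>x\<in>mat_set n.
        nrm m (mmul smul m n \<alpha> x \<beta>) \<le> cmat_norm m n \<alpha> * nrm n x * cmat_norm n m \<beta>) \<and>
     (\<forall>n m. \<forall>x\<in>mat_set n. \<forall>y\<in>mat_set m. nrm (n + m) (dsum n m x y) = max (nrm n x) (nrm m y))"

definition findim :: "(complex \<Rightarrow> 'v::ab_group_add \<Rightarrow> 'v) \<Rightarrow> bool" where
  "findim smul \<longleftrightarrow> (\<exists>B. finite B \<and> module.span smul B = UNIV)"

definition trunc :: "nat \<Rightarrow> (nat \<Rightarrow> nat \<Rightarrow> 'v::zero) \<Rightarrow> (nat \<Rightarrow> nat \<Rightarrow> 'v)" where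
  "trunc n x = (\<lambda>i j. if i < n \<and> j < n then x i j else 0)"

text \<open>K(V), the completion of M_infinity(V), realised as the infinite matrices over V
  whose truncations form a Cauchy sequence (in the norm of M_infinity(V)).\<close>
definition KV :: "(nat \<Rightarrow> (nat \<Rightarrow> nat \<Rightarrow> 'v::ab_group_add) \<Rightarrow> real) \<Rightarrow> (nat \<Rightarrow> nat \<Rightarrow> 'v) set" where
  "KV nrm = {x. \<forall>\<epsilon>>0. \<exists>N. \<forall>m n. N \<le> m \<longrightarrow> N \<le> n \<longrightarrow>
       nrm (max m n) (\<lambda>i j. trunc m x i j - trunc n x i j) < \<epsilon>}"

text \<open>sigma in M_k(M_infinity): a k x k matrix of finitely supported scalar matrices.\<close>
definition fin_supp :: "nat \<Rightarrow> (nat \<Rightarrow> nat \<Rightarrow> nat \<Rightarrow> nat \<Rightarrow> complex) \<Rightarrow> bool" where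
  "fin_supp N \<sigma> \<longleftrightarrow> (\<forall>i j u v. (N \<le> u \<or> N \<le> v) \<longrightarrow> \<sigma> i j u v = 0)"

text \<open>The map K -> M_k given by sigma (pairing <t,a> = sum t_uv a_uv), amplified to M_p(K) -> M_p(M_k);
  a in M_p(M_n) is encoded as a pn x pn matrix A, block (r,s) entry (u,v) = A (r*n+u) (s*n+v),
  and the result in M_p(M_k) as a pk x pk matrix.\<close>
definition sigma_ampl :: "nat \<Rightarrow> (nat \<Rightarrow> nat \<Rightarrow> nat \<Rightarrow> nat \<Rightarrow> complex) \<Rightarrow> nat \<Rightarrow>
    (nat \<Rightarrow> nat \<Rightarrow> complex) \<Rightarrow> (nat \<Rightarrow> nat \<Rightarrow> complex)" where
  "sigma_ampl k \<sigma> n A = (\<lambda>I J. \<Sum>u<n. \<Sum>v<n.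
      \<sigma> (I mod k) (J mod k) u v * A ((I div k) * n + u) ((J div k) * n + v))"

text \<open>The trace class norm of sigma in M_k(T) = CB(K, M_k): the cb norm of the associated map.\<close>
definition tnorm :: "nat \<Rightarrow> (nat \<Rightarrow> nat \<Rightarrow> nat \<Rightarrow> nat \<Rightarrow> complex) \<Rightarrow> real" where
  "tnorm k \<sigma> = Sup {cmat_norm (p * k) (p * k) (sigma_ampl k \<sigma> n A) | p n A.
                      cmat_norm (p * n) (p * n) A \<le> 1}"

definition slice :: "(complex \<Rightarrow> 'v \<Rightarrow> 'v) \<Rightarrow> nat \<Rightarrow> nat \<Rightarrow> (nat \<Rightarrow> nat \<Rightarrow> nat \<Rightarrow> nat \<Rightarrow> complex)
    \<Rightarrow> (nat \<Rightarrow> nat \<Rightarrow> 'v::ab_group_add) \<Rightarrow> (nat \<Rightarrow> nat \<Rightarrow> 'v)" where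
  "slice smul k N \<sigma> x = (\<lambda>i j. if i < k \<and> j < k
      then (\<Sum>u<N. \<Sum>v<N. smul (\<sigma> i j u v) (x u v)) else 0)"

definition mclosure :: "(nat \<Rightarrow> (nat \<Rightarrow> nat \<Rightarrow> 'v::ab_group_add) \<Rightarrow> real) \<Rightarrow> nat
    \<Rightarrow> (nat \<Rightarrow> nat \<Rightarrow> 'v) set \<Rightarrow> (nat \<Rightarrow> nat \<Rightarrow> 'v) set" where
  "mclosure nrm k S = {y \<in> mat_set k. \<forall>\<epsilon>>0. \<exists>s\<in>S. nrm k (\<lambda>i j. y i j - s i j) < \<epsilon>}"

definition op_compact :: "(complex \<Rightarrow> 'v \<Rightarrow> 'v) \<Rightarrow> (nat \<Rightarrow> (nat \<Rightarrow> nat \<Rightarrow> 'v::ab_group_add) \<Rightarrow> real)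
    \<Rightarrow> (nat \<Rightarrow> (nat \<Rightarrow> nat \<Rightarrow> 'v) set) \<Rightarrow> bool" where
  "op_compact smul nrm X \<longleftrightarrow>
     (\<forall>k. X k \<subseteq> mat_set k \<and> mclosure nrm k (X k) = X k) \<and>
     (\<exists>x\<in>KV nrm. \<forall>k. X k \<subseteq> mclosure nrm k
        {slice smul k N \<sigma> x | N \<sigma>. fin_supp N \<sigma> \<and> tnorm k \<sigma> \<le> 1})"

definition matrix_unit_ball :: "(nat \<Rightarrow> (nat \<Rightarrow> nat \<Rightarrow> 'v::zero) \<Rightarrow> real) \<Rightarrow> nat \<Rightarrow> (nat \<Rightarrow> nat \<Rightarrow> 'v) set" where
  "matrix_unit_ball nrm k = {x \<in> mat_set k. nrm k x \<le> 1}"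

end

theory Submission
  imports Defs
begin

text \<open>Fix a basis \<open>b\<^sub>1, \<dots>, b\<^sub>d\<close> of \<open>V\<close>. In finite dimension the coefficient
  functionals \<open>\<phi>\<^sub>u\<close> are bounded, \<open>|\<phi>\<^sub>u v| \<le> C \<parallel>v\<parallel>\<close>, and a bounded functional is
  completely bounded with the same bound, so the scalar matrix \<open>\<phi>\<^sub>u(y)\<close> of \<open>y \<in> M\<^sub>k(V)\<close> has
  operator norm at most \<open>C \<parallel>y\<parallel>\<^sub>k\<close>. Put \<open>x = diag(\<lambda> b\<^sub>1, \<dots>, \<lambda> b\<^sub>d) \<in> M\<^sub>d(V)\<close> with
  \<open>\<lambda> \<ge> d C\<close>. Every \<open>y\<close> in the unit ball of \<open>M\<^sub>k(V)\<close> is exactly the slice \<open>(\<sigma> \<otimes> id)(x)\<close>,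
  where the \<open>(i, j)\<close> entry of \<open>\<sigma>\<close> is \<open>diag(\<phi>\<^sub>u(y\<^sub>i\<^sub>j) / \<lambda>)\<^sub>u\<close>. Amplifications of \<open>\<sigma>\<close> split
  into a sum over \<open>u\<close> of Kronecker products of compressions of the argument with
  \<open>\<phi>\<^sub>u(y) / \<lambda>\<close>, so \<open>\<parallel>\<sigma>\<parallel>\<^sub>T \<le> d C / \<lambda> \<le> 1\<close>.\<close>

definition cvec_norm :: "nat \<Rightarrow> (nat \<Rightarrow> complex) \<Rightarrow> real" where
  "cvec_norm n \<xi> = L2_set (\<lambda>j. cmod (\<xi> j)) {..<n}"

definition cmat_apply :: "nat \<Rightarrow> (nat \<Rightarrow> nat \<Rightarrow> complex) \<Rightarrow> (nat \<Rightarrow> complex) \<Rightarrow> nat \<Rightarrow> complex" where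
  "cmat_apply n a \<xi> = (\<lambda>i. \<Sum>j<n. a i j * \<xi> j)"

lemma cvec_norm_nonneg: "0 \<le> cvec_norm n \<xi>"
  by (simp add: cvec_norm_def L2_set_nonneg)

lemma cvec_norm_power2: "(cvec_norm n \<xi>)\<^sup>2 = (\<Sum>j<n. (cmod (\<xi> j))\<^sup>2)"
  by (simp add: cvec_norm_def L2_set_def sum_nonneg)

lemma cvec_norm_zero [simp]: "cvec_norm n (\<lambda>_. 0) = 0"
  by (simp add: cvec_norm_def L2_set_def)

lemma cvec_norm_eq_0_iff: "cvec_norm n \<xi> = 0 \<longleftrightarrow> (\<forall>j<n. \<xi> j = 0)"
  by (auto simp: cvec_norm_def L2_set_def sum_nonneg_eq_0_iff)

lemma cvec_norm_Suc_0 [simp]: "cvec_norm (Suc 0) \<xi> = cmod (\<xi> 0)"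
  by (simp add: cvec_norm_def L2_set_def)

lemma cvec_norm_scale: "cvec_norm n (\<lambda>j. c * \<xi> j) = cmod c * cvec_norm n \<xi>"
  by (simp add: cvec_norm_def norm_mult L2_set_right_distrib)

lemma cvec_norm_cnj: "cvec_norm n (\<lambda>j. cnj (\<xi> j)) = cvec_norm n \<xi>"
  by (simp add: cvec_norm_def)

lemma cvec_norm_le_sum: "cvec_norm n \<xi> \<le> (\<Sum>j<n. cmod (\<xi> j))"
  unfolding cvec_norm_def by (rule order_trans[OF L2_set_le_sum]) auto

lemma norm_le_cvec_norm: "j < n \<Longrightarrow> cmod (\<xi> j) \<le> cvec_norm n \<xi>"
  unfolding cvec_norm_def by (rule member_le_L2_set) auto

lemma cvec_norm_triangle: "cvec_norm n (\<lambda>i. \<xi> i + \<eta> i) \<le> cvec_norm n \<xi> + cvec_norm n \<eta>"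
proof -
  have "cvec_norm n (\<lambda>i. \<xi> i + \<eta> i) \<le> L2_set (\<lambda>i. cmod (\<xi> i) + cmod (\<eta> i)) {..<n}"
    unfolding cvec_norm_def by (rule L2_set_mono) (auto simp: norm_triangle_ineq)
  also have "\<dots> \<le> cvec_norm n \<xi> + cvec_norm n \<eta>"
    unfolding cvec_norm_def by (rule L2_set_triangle_ineq)
  finally show ?thesis .
qed

lemma cvec_norm_sum: "cvec_norm n (\<lambda>i. \<Sum>u\<in>S. \<xi> u i) \<le> (\<Sum>u\<in>S. cvec_norm n (\<xi> u))"
proof (induction S rule: infinite_finite_induct)
  case (insert u S)
  then show ?case
    using cvec_norm_triangle[of n "\<xi> u" "\<lambda>i. \<Sum>u\<in>S. \<xi> u i"] by simp
qed simp_all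

lemma cmat_apply_scale: "cmat_apply n a (\<lambda>j. c * \<xi> j) = (\<lambda>i. c * cmat_apply n a \<xi> i)"
  by (auto simp: cmat_apply_def sum_distrib_left algebra_simps)

lemma cmat_norm_eq_Sup:
  "cmat_norm m n a = Sup {cvec_norm m (cmat_apply n a \<xi>) | \<xi>. cvec_norm n \<xi> \<le> 1}"
proof -
  have "(\<Sum>j<n. (cmod (\<xi> j))\<^sup>2) \<le> 1 \<longleftrightarrow> cvec_norm n \<xi> \<le> 1" for \<xi>
    by (simp add: cvec_norm_def L2_set_def)
  then show ?thesis
    by (simp add: cmat_norm_def cvec_norm_def L2_set_def cmat_apply_def)
qed

lemma bdd_above_cmat_norm: "bdd_above {cvec_norm m (cmat_apply n a \<xi>) | \<xi>. cvec_norm n \<xi> \<le> 1}"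
proof (rule bdd_aboveI[where M = "\<Sum>i<m. \<Sum>j<n. cmod (a i j)"], clarify)
  fix \<xi> :: "nat \<Rightarrow> complex"
  assume \<xi>: "cvec_norm n \<xi> \<le> 1"
  have "cmod (cmat_apply n a \<xi> i) \<le> (\<Sum>j<n. cmod (a i j))" for i
  proof -
    have "cmod (cmat_apply n a \<xi> i) \<le> (\<Sum>j<n. cmod (a i j) * cmod (\<xi> j))"
      unfolding cmat_apply_def by (rule order_trans[OF norm_sum]) (simp add: norm_mult)
    also have "\<dots> \<le> (\<Sum>j<n. cmod (a i j))"
      using order_trans[OF norm_le_cvec_norm \<xi>] by (intro sum_mono) (simp add: mult_left_le)
    finally show ?thesis .
  qed
  then show "cvec_norm m (cmat_apply n a \<xi>) \<le> (\<Sum>i<m. \<Sum>j<n. cmod (a i j))"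
    by (intro order_trans[OF cvec_norm_le_sum] sum_mono)
qed

lemma cmat_norm_ge: "cvec_norm n \<xi> \<le> 1 \<Longrightarrow> cvec_norm m (cmat_apply n a \<xi>) \<le> cmat_norm m n a"
  unfolding cmat_norm_eq_Sup by (rule cSup_upper[OF _ bdd_above_cmat_norm]) auto

lemma cmat_norm_le:
  assumes "\<And>\<xi>. cvec_norm n \<xi> \<le> 1 \<Longrightarrow> cvec_norm m (cmat_apply n a \<xi>) \<le> c"
  shows "cmat_norm m n a \<le> c"
proof -
  have "cvec_norm n (\<lambda>_. 0) \<le> 1" by simp
  then have "{cvec_norm m (cmat_apply n a \<xi>) | \<xi>. cvec_norm n \<xi> \<le> 1} \<noteq> {}" by blast
  then show ?thesis
    unfolding cmat_norm_eq_Sup by (rule cSup_least) (use assms in auto)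
qed

lemma cmat_norm_nonneg: "0 \<le> cmat_norm m n a"
  using cmat_norm_ge[of n "\<lambda>_. 0" m a] cvec_norm_nonneg[of m "cmat_apply n a (\<lambda>_. 0)"] by simp

lemma cvec_norm_cmat_apply_le: "cvec_norm m (cmat_apply n a \<xi>) \<le> cmat_norm m n a * cvec_norm n \<xi>"
proof (cases "cvec_norm n \<xi> = 0")
  case True
  then have "cmat_apply n a \<xi> = (\<lambda>_. 0)"
    by (auto simp: cvec_norm_eq_0_iff cmat_apply_def)
  with True show ?thesis by simp
next
  case False
  define t where "t = cvec_norm n \<xi>"
  have t: "t > 0" using False cvec_norm_nonneg[of n \<xi>] by (simp add: t_def)
  have "cvec_norm n (\<lambda>j. complex_of_real (1/t) * \<xi> j) = 1"
    using t by (subst cvec_norm_scale) (simp add: t_def[symmetric] norm_divide)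
  then have "cvec_norm m (cmat_apply n a (\<lambda>j. complex_of_real (1/t) * \<xi> j)) \<le> cmat_norm m n a"
    by (intro cmat_norm_ge) simp
  then have "cvec_norm m (cmat_apply n a \<xi>) / t \<le> cmat_norm m n a"
    using t by (subst (asm) cmat_apply_scale, subst (asm) cvec_norm_scale) (simp add: norm_divide)
  then show ?thesis using t by (simp add: t_def[symmetric] field_simps)
qed

lemma cmat_norm_le_iff:
  assumes "0 \<le> c"
  shows "cmat_norm m n a \<le> c \<longleftrightarrow> (\<forall>\<xi>. cvec_norm m (cmat_apply n a \<xi>) \<le> c * cvec_norm n \<xi>)"
proof
  assume "cmat_norm m n a \<le> c"
  then show "\<forall>\<xi>. cvec_norm m (cmat_apply n a \<xi>) \<le> c * cvec_norm n \<xi>"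
    by (meson cvec_norm_cmat_apply_le cvec_norm_nonneg mult_right_mono order_trans)
next
  assume "\<forall>\<xi>. cvec_norm m (cmat_apply n a \<xi>) \<le> c * cvec_norm n \<xi>"
  then show "cmat_norm m n a \<le> c"
    using assms by (intro cmat_norm_le) (meson mult_left_le order_trans)
qed

lemma cmat_norm_sum_le:
  "cmat_norm m n (\<lambda>i j. \<Sum>u\<in>S. a u i j) \<le> (\<Sum>u\<in>S. cmat_norm m n (a u))"
proof (subst cmat_norm_le_iff, goal_cases)
  case 1
  show ?case by (simp add: sum_nonneg cmat_norm_nonneg)
next
  case 2
  show ?case
  proof
    fix \<xi>
    have "cmat_apply n (\<lambda>i j. \<Sum>u\<in>S. a u i j) \<xi> = (\<lambda>i. \<Sum>u\<in>S. cmat_apply n (a u) \<xi> i)"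
      by (auto simp: cmat_apply_def sum_distrib_right intro: sum.swap)
    then have "cvec_norm m (cmat_apply n (\<lambda>i j. \<Sum>u\<in>S. a u i j) \<xi>)
        \<le> (\<Sum>u\<in>S. cvec_norm m (cmat_apply n (a u) \<xi>))"
      by (simp add: cvec_norm_sum)
    also have "\<dots> \<le> (\<Sum>u\<in>S. cmat_norm m n (a u) * cvec_norm n \<xi>)"
      by (intro sum_mono cvec_norm_cmat_apply_le)
    finally show "cvec_norm m (cmat_apply n (\<lambda>i j. \<Sum>u\<in>S. a u i j) \<xi>)
        \<le> (\<Sum>u\<in>S. cmat_norm m n (a u)) * cvec_norm n \<xi>"
      by (simp add: sum_distrib_right)
  qed
qed

lemma cmat_norm_scale_le: "cmat_norm m n (\<lambda>i j. c * a i j) \<le> cmod c * cmat_norm m n a"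
proof (subst cmat_norm_le_iff)
  show "0 \<le> cmod c * cmat_norm m n a" by (simp add: cmat_norm_nonneg)
  show "\<forall>\<xi>. cvec_norm m (cmat_apply n (\<lambda>i j. c * a i j) \<xi>) \<le> cmod c * cmat_norm m n a * cvec_norm n \<xi>"
  proof
    fix \<xi>
    have "cmat_apply n (\<lambda>i j. c * a i j) \<xi> = (\<lambda>i. c * cmat_apply n a \<xi> i)"
      by (simp add: cmat_apply_def sum_distrib_left mult.assoc)
    then show "cvec_norm m (cmat_apply n (\<lambda>i j. c * a i j) \<xi>) \<le> cmod c * cmat_norm m n a * cvec_norm n \<xi>"
      by (simp add: cvec_norm_scale mult.assoc mult_left_mono cvec_norm_cmat_apply_le)
  qed
qed

lemma cmat_norm_row_le: "cmat_norm 1 n (\<lambda>_ j. a j) \<le> cvec_norm n a"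
proof (rule cmat_norm_le)
  fix \<xi> :: "nat \<Rightarrow> complex"
  assume \<xi>: "cvec_norm n \<xi> \<le> 1"
  have "cvec_norm 1 (cmat_apply n (\<lambda>_ j. a j) \<xi>) = cmod (\<Sum>j<n. a j * \<xi> j)"
    by (simp add: cmat_apply_def)
  also have "\<dots> \<le> (\<Sum>j<n. \<bar>cmod (a j)\<bar> * \<bar>cmod (\<xi> j)\<bar>)"
    by (rule order_trans[OF norm_sum]) (simp add: norm_mult)
  also have "\<dots> \<le> cvec_norm n a * cvec_norm n \<xi>"
    unfolding cvec_norm_def by (rule L2_set_mult_ineq)
  also have "\<dots> \<le> cvec_norm n a"
    using \<xi> cvec_norm_nonneg[of n a] by (simp add: mult_left_le)
  finally show "cvec_norm 1 (cmat_apply n (\<lambda>_ j. a j) \<xi>) \<le> cvec_norm n a" .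
qed

lemma cmat_norm_column_le: "cmat_norm m 1 (\<lambda>i _. a i) \<le> cvec_norm m a"
proof (rule cmat_norm_le)
  fix \<xi> :: "nat \<Rightarrow> complex"
  assume "cvec_norm 1 \<xi> \<le> 1"
  then have "cmod (\<xi> 0) \<le> 1" by simp
  moreover have "cmat_apply 1 (\<lambda>i _. a i) \<xi> = (\<lambda>i. \<xi> 0 * a i)"
    by (simp add: cmat_apply_def mult.commute)
  ultimately show "cvec_norm m (cmat_apply 1 (\<lambda>i _. a i) \<xi>) \<le> cvec_norm m a"
    by (simp add: cvec_norm_scale mult_left_le_one_le cvec_norm_nonneg)
qed

section \<open>Kronecker products and compressions\<close>

lemma sum_lessThan_mult_blocks:
  fixes g :: "nat \<Rightarrow> 'a::comm_monoid_add"
  shows "(\<Sum>I<p * k. g I) = (\<Sum>r<p. \<Sum>i<k. g (r * k + i))"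
proof -
  have "(\<Sum>I\<in>{r * k..<r * k + k}. g I) = (\<Sum>i<k. g (r * k + i))" for r
    using sum.shift_bounds_nat_ivl[of g 0 "r * k" k] by (simp add: lessThan_atLeast0 add.commute)
  then show ?thesis
    using sum.nat_group[of g k p] by (simp add: mult.commute)
qed

lemma power2_cvec_norm_cmat_apply_le:
  "(cvec_norm m (cmat_apply n a \<xi>))\<^sup>2 \<le> (cmat_norm m n a)\<^sup>2 * (cvec_norm n \<xi>)\<^sup>2"
  using power_mono[OF cvec_norm_cmat_apply_le cvec_norm_nonneg]
  by (simp add: power_mult_distrib)

lemma cmat_norm_le_if_power2:
  assumes c: "0 \<le> c"
    and bound: "\<And>\<xi>. (cvec_norm m (cmat_apply n a \<xi>))\<^sup>2 \<le> c\<^sup>2 * (cvec_norm n \<xi>)\<^sup>2"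
  shows "cmat_norm m n a \<le> c"
proof -
  have "cvec_norm m (cmat_apply n a \<xi>) \<le> c * cvec_norm n \<xi>" for \<xi>
  proof (rule power2_le_imp_le)
    show "(cvec_norm m (cmat_apply n a \<xi>))\<^sup>2 \<le> (c * cvec_norm n \<xi>)\<^sup>2"
      using bound[of \<xi>] by (simp only: power_mult_distrib)
    show "0 \<le> c * cvec_norm n \<xi>"
      using c cvec_norm_nonneg[of n \<xi>] by simp
  qed
  with c show ?thesis by (simp add: cmat_norm_le_iff)
qed

definition kron :: "nat \<Rightarrow> (nat \<Rightarrow> nat \<Rightarrow> complex) \<Rightarrow> (nat \<Rightarrow> nat \<Rightarrow> complex) \<Rightarrow> nat \<Rightarrow> nat \<Rightarrow> complex" where
  "kron k X Y = (\<lambda>I J. X (I div k) (J div k) * Y (I mod k) (J mod k))"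

lemma cmat_norm_kron_le: "cmat_norm (p * k) (p * k) (kron k X Y) \<le> cmat_norm p p X * cmat_norm k k Y"
proof (rule cmat_norm_le_if_power2)
  show "0 \<le> cmat_norm p p X * cmat_norm k k Y" by (simp add: cmat_norm_nonneg)
  fix \<xi> :: "nat \<Rightarrow> complex"
  define \<xi>s where "\<xi>s s j = \<xi> (s * k + j)" for s j
  define Z where "Z s = cmat_apply k Y (\<xi>s s)" for s
  have blocks: "cmat_apply (p * k) (kron k X Y) \<xi> (r * k + i) = cmat_apply p X (\<lambda>s. Z s i) r"
    if "i < k" for r i
  proof -
    have "cmat_apply (p * k) (kron k X Y) \<xi> (r * k + i) = (\<Sum>s<p. \<Sum>j<k. X r s * Y i j * \<xi> (s * k + j))"
      unfolding cmat_apply_def kron_def sum_lessThan_mult_blocks using that by (simp add: algebra_simps)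
    then show ?thesis
      by (simp add: cmat_apply_def Z_def \<xi>s_def sum_distrib_left algebra_simps)
  qed
  have "(cvec_norm (p * k) (cmat_apply (p * k) (kron k X Y) \<xi>))\<^sup>2
      = (\<Sum>r<p. \<Sum>i<k. (cmod (cmat_apply p X (\<lambda>s. Z s i) r))\<^sup>2)"
    unfolding cvec_norm_power2 sum_lessThan_mult_blocks by (simp add: blocks)
  also have "\<dots> = (\<Sum>i<k. (cvec_norm p (cmat_apply p X (\<lambda>s. Z s i)))\<^sup>2)"
    unfolding cvec_norm_power2 by (rule sum.swap)
  also have "\<dots> \<le> (\<Sum>i<k. (cmat_norm p p X)\<^sup>2 * (cvec_norm p (\<lambda>s. Z s i))\<^sup>2)"
    by (intro sum_mono power2_cvec_norm_cmat_apply_le)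
  also have "\<dots> = (cmat_norm p p X)\<^sup>2 * (\<Sum>s<p. (cvec_norm k (Z s))\<^sup>2)"
    unfolding cvec_norm_power2 by (simp add: sum_distrib_left sum.swap[of _ "{..<k}"])
  also have "\<dots> \<le> (cmat_norm p p X)\<^sup>2 * (\<Sum>s<p. (cmat_norm k k Y)\<^sup>2 * (cvec_norm k (\<xi>s s))\<^sup>2)"
    unfolding Z_def by (intro mult_left_mono sum_mono power2_cvec_norm_cmat_apply_le) auto
  also have "\<dots> = (cmat_norm p p X * cmat_norm k k Y)\<^sup>2 * (cvec_norm (p * k) \<xi>)\<^sup>2"
    unfolding cvec_norm_power2 sum_lessThan_mult_blocks \<xi>s_def
    by (simp add: sum_distrib_left power_mult_distrib algebra_simps)
  finally show "(cvec_norm (p * k) (cmat_apply (p * k) (kron k X Y) \<xi>))\<^sup>2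
      \<le> (cmat_norm p p X * cmat_norm k k Y)\<^sup>2 * (cvec_norm (p * k) \<xi>)\<^sup>2" .
qed

text \<open>The \<open>(u, u)\<close> entries of the \<open>n \<times> n\<close> blocks of \<open>A \<in> M\<^sub>p(M\<^sub>n)\<close>, in the block encoding
  of \<^const>\<open>sigma_ampl\<close>.\<close>
definition compress :: "nat \<Rightarrow> nat \<Rightarrow> (nat \<Rightarrow> nat \<Rightarrow> complex) \<Rightarrow> nat \<Rightarrow> nat \<Rightarrow> complex" where
  "compress n u A = (\<lambda>r s. A (r * n + u) (s * n + u))"

lemma cmat_norm_compress_le:
  assumes u: "u < n"
  shows "cmat_norm p p (compress n u A) \<le> cmat_norm (p * n) (p * n) A"
proof (rule cmat_norm_le_if_power2[OF cmat_norm_nonneg])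
  fix \<eta> :: "nat \<Rightarrow> complex"
  define \<xi> where "\<xi> J = (if J mod n = u then \<eta> (J div n) else 0)" for J
  have \<xi>_blocks: "\<xi> (s * n + i) = (if i = u then \<eta> s else 0)" if "i < n" for s i
    using that by (simp add: \<xi>_def)
  have "(cvec_norm (p * n) \<xi>)\<^sup>2 = (\<Sum>s<p. \<Sum>i<n. (cmod (if i = u then \<eta> s else 0))\<^sup>2)"
    unfolding cvec_norm_power2 sum_lessThan_mult_blocks by (simp add: \<xi>_blocks)
  also have "\<dots> = (cvec_norm p \<eta>)\<^sup>2"
    unfolding cvec_norm_power2 using u
    by (simp add: if_distrib[of cmod] if_distrib[of "\<lambda>x. x\<^sup>2"] sum.delta cong: if_cong)
  finally have norm_\<xi>: "(cvec_norm (p * n) \<xi>)\<^sup>2 = (cvec_norm p \<eta>)\<^sup>2" .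
  have apply_\<xi>: "cmat_apply (p * n) A \<xi> (r * n + u) = cmat_apply p (compress n u A) \<eta> r" for r
  proof -
    have "cmat_apply (p * n) A \<xi> (r * n + u)
        = (\<Sum>s<p. \<Sum>i<n. A (r * n + u) (s * n + i) * (if i = u then \<eta> s else 0))"
      unfolding cmat_apply_def sum_lessThan_mult_blocks by (simp add: \<xi>_blocks)
    also have "\<dots> = (\<Sum>s<p. A (r * n + u) (s * n + u) * \<eta> s)"
      using u by (simp add: if_distrib[of "\<lambda>x. _ * x"] sum.delta cong: if_cong)
    finally show ?thesis by (simp add: cmat_apply_def compress_def)
  qed
  have "(cvec_norm p (cmat_apply p (compress n u A) \<eta>))\<^sup>2
      = (\<Sum>r<p. (cmod (cmat_apply (p * n) A \<xi> (r * n + u)))\<^sup>2)"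
    unfolding cvec_norm_power2 by (simp add: apply_\<xi>)
  also have "\<dots> \<le> (\<Sum>r<p. \<Sum>i<n. (cmod (cmat_apply (p * n) A \<xi> (r * n + i)))\<^sup>2)"
    using u by (intro sum_mono member_le_sum) auto
  also have "\<dots> = (cvec_norm (p * n) (cmat_apply (p * n) A \<xi>))\<^sup>2"
    unfolding cvec_norm_power2 sum_lessThan_mult_blocks ..
  also have "\<dots> \<le> (cmat_norm (p * n) (p * n) A)\<^sup>2 * (cvec_norm p \<eta>)\<^sup>2"
    using power2_cvec_norm_cmat_apply_le[of "p * n" "p * n" A \<xi>] by (simp only: norm_\<xi>)
  finally show "(cvec_norm p (cmat_apply p (compress n u A) \<eta>))\<^sup>2
      \<le> (cmat_norm (p * n) (p * n) A)\<^sup>2 * (cvec_norm p \<eta>)\<^sup>2" .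
qed

section \<open>Diagonal slice maps\<close>

definition diag_sigma :: "nat \<Rightarrow> (nat \<Rightarrow> nat \<Rightarrow> nat \<Rightarrow> complex) \<Rightarrow> nat \<Rightarrow> nat \<Rightarrow> nat \<Rightarrow> nat \<Rightarrow> complex" where
  "diag_sigma d b = (\<lambda>i j u v. if u = v \<and> u < d then b u i j else 0)"

lemma sigma_ampl_diag_sigma:
  "sigma_ampl k (diag_sigma d b) n A = (\<lambda>I J. \<Sum>u<min n d. kron k (compress n u A) (b u) I J)"
proof (intro ext)
  fix I J
  have "sigma_ampl k (diag_sigma d b) n A I J
      = (\<Sum>u<n. if u \<in> {..<d} then kron k (compress n u A) (b u) I J else 0)"
    unfolding sigma_ampl_def diag_sigma_def kron_def compress_def
    by (intro sum.cong refl) (simp add: if_distrib[of "\<lambda>x. x * _"] sum.delta mult.commute cong: if_cong)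
  also have "\<dots> = (\<Sum>u<min n d. kron k (compress n u A) (b u) I J)"
    unfolding sum.inter_restrict[OF finite_lessThan, symmetric] by (simp add: greaterThan_Int_greaterThan)
  finally show "sigma_ampl k (diag_sigma d b) n A I J = (\<Sum>u<min n d. kron k (compress n u A) (b u) I J)" .
qed

lemma tnorm_diag_sigma_le: "tnorm k (diag_sigma d b) \<le> (\<Sum>u<d. cmat_norm k k (b u))"
  unfolding tnorm_def
proof (rule cSup_least)
  have "cmat_norm (0 * 0) (0 * 0) (\<lambda>_ _. 0) \<le> 1"
    by (rule cmat_norm_le) (simp add: cvec_norm_def)
  then show "{cmat_norm (p * k) (p * k) (sigma_ampl k (diag_sigma d b) n A) | p n A.
      cmat_norm (p * n) (p * n) A \<le> 1} \<noteq> {}" by blast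
next
  fix t
  assume "t \<in> {cmat_norm (p * k) (p * k) (sigma_ampl k (diag_sigma d b) n A) | p n A.
      cmat_norm (p * n) (p * n) A \<le> 1}"
  then obtain p n A where t: "t = cmat_norm (p * k) (p * k) (sigma_ampl k (diag_sigma d b) n A)"
    and A: "cmat_norm (p * n) (p * n) A \<le> 1" by blast
  have "t \<le> (\<Sum>u<min n d. cmat_norm (p * k) (p * k) (kron k (compress n u A) (b u)))"
    unfolding t sigma_ampl_diag_sigma by (rule cmat_norm_sum_le)
  also have "\<dots> \<le> (\<Sum>u<min n d. cmat_norm p p (compress n u A) * cmat_norm k k (b u))"
    by (intro sum_mono cmat_norm_kron_le)
  also have "\<dots> \<le> (\<Sum>u<min n d. cmat_norm k k (b u))"
  proof (intro sum_mono)
    fix u assume "u \<in> {..<min n d}"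
    then have "cmat_norm p p (compress n u A) \<le> 1"
      using cmat_norm_compress_le[of u n p A] A by simp
    then show "cmat_norm p p (compress n u A) * cmat_norm k k (b u) \<le> cmat_norm k k (b u)"
      by (simp add: mult_left_le_one_le cmat_norm_nonneg)
  qed
  also have "\<dots> \<le> (\<Sum>u<d. cmat_norm k k (b u))"
    by (intro sum_mono2) (auto simp: cmat_norm_nonneg)
  finally show "t \<le> (\<Sum>u<d. cmat_norm k k (b u))" .
qed

definition diag_mat :: "nat \<Rightarrow> (nat \<Rightarrow> 'v::zero) \<Rightarrow> nat \<Rightarrow> nat \<Rightarrow> 'v" where
  "diag_mat d g = (\<lambda>u v. if u = v \<and> u < d then g u else 0)"

lemma diag_mat_in_mat_set: "diag_mat d g \<in> mat_set d"
  by (simp add: diag_mat_def mat_set_def)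

lemma fin_supp_diag_sigma: "fin_supp d (diag_sigma d b)"
  by (simp add: fin_supp_def diag_sigma_def)

lemma slice_diag_sigma_diag_mat:
  fixes smul :: "complex \<Rightarrow> 'v::ab_group_add \<Rightarrow> 'v"
  assumes "vector_space smul"
  shows "slice smul k d (diag_sigma d b) (diag_mat d g)
    = (\<lambda>i j. if i < k \<and> j < k then \<Sum>u<d. smul (b u i j) (g u) else 0)"
proof -
  interpret vector_space smul by fact
  show ?thesis
    unfolding slice_def diag_sigma_def diag_mat_def
    by (intro ext) (simp add: if_distrib[of "smul _"] sum.delta cong: if_cong)
qed

section \<open>Operator spaces\<close>

definition mat1 :: "'v::zero \<Rightarrow> nat \<Rightarrow> nat \<Rightarrow> 'v" where
  "mat1 v = (\<lambda>i j. if i = 0 \<and> j = 0 then v else 0)"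

lemma mat1_in_mat_set: "mat1 v \<in> mat_set 1"
  by (simp add: mat1_def mat_set_def)

locale op_space =
  fixes smul :: "complex \<Rightarrow> 'v::ab_group_add \<Rightarrow> 'v"
    and nrm :: "nat \<Rightarrow> (nat \<Rightarrow> nat \<Rightarrow> 'v) \<Rightarrow> real"
  assumes operator_space: "operator_space smul nrm"
begin

sublocale vs: vector_space smul
  using operator_space by (simp add: operator_space_def)

lemma nrm_nonneg: "x \<in> mat_set k \<Longrightarrow> 0 \<le> nrm k x"
  and nrm_eq_0_iff: "x \<in> mat_set k \<Longrightarrow> nrm k x = 0 \<longleftrightarrow> x = (\<lambda>i j. 0)"
  and nrm_triangle: "x \<in> mat_set k \<Longrightarrow> y \<in> mat_set k \<Longrightarrow> nrm k (\<lambda>i j. x i j + y i j) \<le> nrm k x + nrm k y"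
  and nrm_scale: "x \<in> mat_set k \<Longrightarrow> nrm k (\<lambda>i j. smul c (x i j)) = cmod c * nrm k x"
  and nrm_mmul_le: "x \<in> mat_set n \<Longrightarrow>
      nrm m (mmul smul m n \<alpha> x \<beta>) \<le> cmat_norm m n \<alpha> * nrm n x * cmat_norm n m \<beta>"
  using operator_space unfolding operator_space_def by auto

lemma nrm_zero [simp]: "nrm k (\<lambda>i j. 0) = 0"
  using nrm_eq_0_iff[of "\<lambda>i j. 0"] by (simp add: mat_set_def)

lemma mem_mclosureI: "y \<in> S \<Longrightarrow> y \<in> mat_set k \<Longrightarrow> y \<in> mclosure nrm k S"
  unfolding mclosure_def by force

lemma mclosure_matrix_unit_ball: "mclosure nrm k (matrix_unit_ball nrm k) = matrix_unit_ball nrm k"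
proof
  show "mclosure nrm k (matrix_unit_ball nrm k) \<subseteq> matrix_unit_ball nrm k"
  proof
    fix y assume "y \<in> mclosure nrm k (matrix_unit_ball nrm k)"
    then have y: "y \<in> mat_set k"
      and approx: "\<And>\<epsilon>. \<epsilon> > 0 \<Longrightarrow> \<exists>s\<in>matrix_unit_ball nrm k. nrm k (\<lambda>i j. y i j - s i j) < \<epsilon>"
      unfolding mclosure_def by auto
    have "nrm k y \<le> 1 + \<epsilon>" if \<epsilon>: "\<epsilon> > 0" for \<epsilon>
    proof -
      obtain s where s: "s \<in> mat_set k" "nrm k s \<le> 1" and ys: "nrm k (\<lambda>i j. y i j - s i j) < \<epsilon>"
        using approx[OF \<epsilon>] by (auto simp: matrix_unit_ball_def)
      have "(\<lambda>i j. y i j - s i j) \<in> mat_set k" using y s(1) by (simp add: mat_set_def)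
      from nrm_triangle[OF this s(1)] have "nrm k y \<le> nrm k (\<lambda>i j. y i j - s i j) + nrm k s"
        by simp
      with s(2) ys show ?thesis by linarith
    qed
    then have "nrm k y \<le> 1" by (rule field_le_epsilon)
    with y show "y \<in> matrix_unit_ball nrm k" by (simp add: matrix_unit_ball_def)
  qed
  show "matrix_unit_ball nrm k \<subseteq> mclosure nrm k (matrix_unit_ball nrm k)"
    by (auto intro: mem_mclosureI simp: matrix_unit_ball_def)
qed

lemma mat_set_subset_KV: "mat_set d \<subseteq> KV nrm"
proof (clarsimp simp: KV_def)
  fix x :: "nat \<Rightarrow> nat \<Rightarrow> 'v" and \<epsilon> :: real
  assume x: "x \<in> mat_set d" and "0 < \<epsilon>"
  have "(\<lambda>i j. trunc m x i j - trunc n x i j) = (\<lambda>i j. 0)" if "d \<le> m" "d \<le> n" for m n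
    using x that by (auto simp: trunc_def mat_set_def fun_eq_iff)
  with \<open>0 < \<epsilon>\<close> show "\<exists>N. \<forall>m\<ge>N. \<forall>n\<ge>N. nrm (max m n) (\<lambda>i j. trunc m x i j - trunc n x i j) < \<epsilon>"
    by (intro exI[of _ d]) simp
qed

definition vnorm :: "'v \<Rightarrow> real" where
  "vnorm v = nrm 1 (mat1 v)"

lemma vnorm_nonneg: "0 \<le> vnorm v"
  unfolding vnorm_def by (rule nrm_nonneg[OF mat1_in_mat_set])

lemma vnorm_eq_0_iff: "vnorm v = 0 \<longleftrightarrow> v = 0"
  unfolding vnorm_def nrm_eq_0_iff[OF mat1_in_mat_set] by (auto simp: mat1_def fun_eq_iff)

lemma vnorm_zero [simp]: "vnorm 0 = 0"
  by (simp add: vnorm_eq_0_iff)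

lemma vnorm_triangle: "vnorm (v + w) \<le> vnorm v + vnorm w"
proof -
  have "mat1 (v + w) = (\<lambda>i j. mat1 v i j + mat1 w i j)" by (auto simp: mat1_def fun_eq_iff)
  then show ?thesis unfolding vnorm_def using nrm_triangle[OF mat1_in_mat_set mat1_in_mat_set] by simp
qed

lemma vnorm_scale: "vnorm (smul c v) = cmod c * vnorm v"
proof -
  have "mat1 (smul c v) = (\<lambda>i j. smul c (mat1 v i j))" by (auto simp: mat1_def fun_eq_iff)
  then show ?thesis unfolding vnorm_def using nrm_scale[OF mat1_in_mat_set] by simp
qed

lemma vnorm_sum_le: "vnorm (\<Sum>b\<in>S. f b) \<le> (\<Sum>b\<in>S. vnorm (f b))"
proof (induction S rule: infinite_finite_induct)
  case (insert b S)
  then show ?case using vnorm_triangle[of "f b" "sum f S"] by simp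
qed simp_all

text \<open>For \<open>w = a \<eta>\<close> with \<open>a = (\<phi> (y i j))\<close>, the functional takes the value \<open>\<parallel>w\<parallel>\<^sup>2\<close> on
  \<open>w\<^sup>* y \<eta> \<in> V\<close>, whose norm Ruan's axiom bounds by \<open>\<parallel>w\<parallel> \<parallel>y\<parallel> \<parallel>\<eta>\<parallel>\<close>.\<close>
lemma cmat_norm_functional_le:
  assumes \<phi>: "Vector_Spaces.linear smul (*) \<phi>"
    and bound: "\<And>v. cmod (\<phi> v) \<le> C * vnorm v" and C: "0 \<le> C"
    and y: "y \<in> mat_set k"
  shows "cmat_norm k k (\<lambda>i j. \<phi> (y i j)) \<le> C * nrm k y"
proof (subst cmat_norm_le_iff, goal_cases)
  case 1
  show ?case using C nrm_nonneg[OF y] by simp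
next
  case 2
  interpret \<phi>: Vector_Spaces.linear smul "(*)" \<phi> by (fact \<phi>)
  show ?case
  proof
    fix \<eta>
    define w where "w = cmat_apply k (\<lambda>i j. \<phi> (y i j)) \<eta>"
    define \<alpha> where "\<alpha> = (\<lambda>(i::nat) p. cnj (w p))"
    define \<beta> where "\<beta> = (\<lambda>q (j::nat). \<eta> q)"
    define z where "z = (\<Sum>p<k. \<Sum>q<k. smul (cnj (w p) * \<eta> q) (y p q))"
    have "\<phi> z = (\<Sum>p<k. \<Sum>q<k. cnj (w p) * (\<eta> q * \<phi> (y p q)))"
      unfolding z_def by (simp add: \<phi>.sum \<phi>.scale mult.assoc)
    also have "\<dots> = (\<Sum>p<k. cnj (w p) * w p)"
      unfolding sum_distrib_left[symmetric] by (simp add: w_def cmat_apply_def mult.commute)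
    also have "\<dots> = complex_of_real ((cvec_norm k w)\<^sup>2)"
      unfolding cvec_norm_power2 of_real_sum
      by (intro sum.cong refl) (simp add: complex_norm_square mult.commute del: of_real_power)
    finally have norm_w: "(cvec_norm k w)\<^sup>2 = cmod (\<phi> z)" by (simp add: norm_power)
    have "vnorm z = nrm 1 (mmul smul 1 k \<alpha> y \<beta>)"
      unfolding vnorm_def by (rule arg_cong[where f = "nrm 1"]) (auto simp: mat1_def mmul_def z_def \<alpha>_def \<beta>_def fun_eq_iff)
    also have "\<dots> \<le> cmat_norm 1 k \<alpha> * nrm k y * cmat_norm k 1 \<beta>"
      by (rule nrm_mmul_le[OF y])
    also have "\<dots> \<le> cvec_norm k w * nrm k y * cvec_norm k \<eta>"
      using cmat_norm_row_le[of k "\<lambda>p. cnj (w p)"] cmat_norm_column_le[of k \<eta>]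
      by (intro mult_mono) (simp_all add: \<alpha>_def \<beta>_def cvec_norm_cnj cmat_norm_nonneg nrm_nonneg[OF y] cvec_norm_nonneg)
    finally have "cmod (\<phi> z) \<le> C * (cvec_norm k w * nrm k y * cvec_norm k \<eta>)"
      using bound[of z] C by (meson mult_left_mono order_trans)
    then have "cvec_norm k w * cvec_norm k w \<le> cvec_norm k w * (C * nrm k y * cvec_norm k \<eta>)"
      unfolding norm_w[symmetric] by (simp add: power2_eq_square mult_ac)
    then show "cvec_norm k w \<le> C * nrm k y * cvec_norm k \<eta>"
      using C nrm_nonneg[OF y] cvec_norm_nonneg[of k w] cvec_norm_nonneg[of k \<eta>]
      by (cases "cvec_norm k w = 0") (simp_all add: mult_le_cancel_left)
  qed
qed

lemma ex_finite_basis: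
  assumes "findim smul"
  obtains B where "finite B" "vs.independent B" "vs.span B = UNIV"
proof -
  obtain B0 where B0: "finite B0" "vs.span B0 = UNIV"
    using assms unfolding findim_def by auto
  obtain B where B: "B \<subseteq> B0" "vs.independent B" "B0 \<subseteq> vs.span B"
    by (rule vs.maximal_independent_subset)
  have "vs.span B = UNIV"
    using B0(2) B(3) vs.span_minimal[OF B(3) vs.subspace_span] by auto
  with B finite_subset[OF B(1) B0(1)] show thesis by (intro that)
qed

lemma vnorm_minus_commute: "vnorm (v - w) = vnorm (w - v)"
  using vnorm_scale[of "-1" "v - w"] by (simp add: vs.scale_minus_left)

lemma abs_vnorm_diff_le: "\<bar>vnorm v - vnorm w\<bar> \<le> vnorm (v - w)"
  using vnorm_triangle[of "v - w" w] vnorm_triangle[of "w - v" v] vnorm_minus_commute[of v w]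
  by (simp add: abs_le_iff)

lemma vnorm_lincomb_diff_le:
  "vnorm ((\<Sum>b\<in>B. smul (c b) b) - (\<Sum>b\<in>B. smul (c' b) b)) \<le> (\<Sum>b\<in>B. cmod (c b - c' b) * vnorm b)"
proof -
  have "(\<Sum>b\<in>B. smul (c b) b) - (\<Sum>b\<in>B. smul (c' b) b) = (\<Sum>b\<in>B. smul (c b - c' b) b)"
    by (simp add: sum_subtractf vs.scale_left_diff_distrib)
  then show ?thesis
    using vnorm_sum_le[of "\<lambda>b. smul (c b - c' b) b" B] by (simp add: vnorm_scale)
qed

lemma tendsto_vnorm_lincomb:
  assumes lim: "\<And>b. b \<in> B \<Longrightarrow> (\<lambda>j. c j b) \<longlonglongrightarrow> l b"
  shows "(\<lambda>j. vnorm (\<Sum>b\<in>B. smul (c j b) b)) \<longlonglongrightarrow> vnorm (\<Sum>b\<in>B. smul (l b) b)"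
    (is "?f \<longlonglongrightarrow> ?l")
proof -
  have "\<forall>j. norm (?f j - ?l) \<le> (\<Sum>b\<in>B. cmod (c j b - l b) * vnorm b)"
    using order_trans[OF abs_vnorm_diff_le vnorm_lincomb_diff_le] by simp
  moreover have "(\<lambda>j. \<Sum>b\<in>B. cmod (c j b - l b) * vnorm b) \<longlonglongrightarrow> 0"
    using lim by (intro tendsto_null_sum) (auto intro!: tendsto_mult_left_zero tendsto_norm_zero LIM_zero)
  ultimately have "(\<lambda>j. ?f j - ?l) \<longlonglongrightarrow> 0"
    by (rule Lim_null_comparison[OF always_eventually])
  then show ?thesis by (simp add: LIM_zero_iff)
qed

text \<open>Compactness of the unit sphere of \<open>\<ell>\<^sup>1(B)\<close>: a sequence of coefficient vectors along
  which the norm tends to \<open>0\<close> has a convergent subsequence, whose limit would be a nontrivial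
  vanishing combination of \<open>B\<close>.\<close>
lemma vnorm_lincomb_bounded_below:
  assumes B: "finite B" "vs.independent B"
  shows "\<exists>m>0. \<forall>c. (\<Sum>b\<in>B. cmod (c b)) = 1 \<longrightarrow> m \<le> vnorm (\<Sum>b\<in>B. smul (c b) b)"
proof (rule ccontr)
  assume "\<not> ?thesis"
  then have "\<forall>j. \<exists>c. (\<Sum>b\<in>B. cmod (c b)) = 1 \<and> vnorm (\<Sum>b\<in>B. smul (c b) b) < inverse (real (Suc j))"
    by (metis not_le inverse_positive_iff_positive of_nat_0_less_iff zero_less_Suc)
  then obtain c where c1: "\<And>j. (\<Sum>b\<in>B. cmod (c j b)) = 1"
    and small: "\<And>j. vnorm (\<Sum>b\<in>B. smul (c j b) b) < inverse (real (Suc j))"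
    by metis
  have "bounded (range (\<lambda>j. c j b))" if "b \<in> B" for b
  proof -
    have "cmod (c j b) \<le> 1" for j
      using member_le_sum[of b B "\<lambda>b. cmod (c j b)"] that B(1) c1[of j] by simp
    then show ?thesis by (intro boundedI[where B = 1]) auto
  qed
  then obtain l r where r: "strict_mono r"
    and conv: "\<forall>\<epsilon>>0. \<forall>\<^sub>F j in sequentially. \<forall>b\<in>B. dist (c (r j) b) (l b) < \<epsilon>"
    using compact_lemma_general[of B "\<lambda>x b. x b" c id] B(1) by (auto simp: image_image)
  have lim: "(\<lambda>j. c (r j) b) \<longlonglongrightarrow> l b" if "b \<in> B" for b
    unfolding tendsto_iff using conv that by (auto elim!: eventually_mono)
  have "(\<lambda>j. \<Sum>b\<in>B. cmod (c (r j) b)) \<longlonglongrightarrow> (\<Sum>b\<in>B. cmod (l b))"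
    using lim by (intro tendsto_intros)
  then have l1: "(\<Sum>b\<in>B. cmod (l b)) = 1"
    using c1 by (simp add: LIMSEQ_const_iff)
  have "\<forall>j. norm (vnorm (\<Sum>b\<in>B. smul (c j b) b)) \<le> inverse (real (Suc j))"
    using small by (simp add: abs_of_nonneg[OF vnorm_nonneg] less_imp_le)
  then have "(\<lambda>j. vnorm (\<Sum>b\<in>B. smul (c j b) b)) \<longlonglongrightarrow> 0"
    by (rule Lim_null_comparison[OF always_eventually LIMSEQ_inverse_real_of_nat])
  from LIMSEQ_subseq_LIMSEQ[OF this r]
  have "(\<lambda>j. vnorm (\<Sum>b\<in>B. smul (c (r j) b) b)) \<longlonglongrightarrow> 0" by (simp add: o_def)
  with tendsto_vnorm_lincomb[OF lim] have "vnorm (\<Sum>b\<in>B. smul (l b) b) = 0"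
    by (rule LIMSEQ_unique)
  then have "(\<Sum>b\<in>B. smul (l b) b) = 0"
    by (simp add: vnorm_eq_0_iff)
  then have "\<forall>b\<in>B. l b = 0"
    using B(2) vs.dependent_finite[OF B(1)] by blast
  with l1 show False by simp
qed

lemma representation_bounded:
  assumes B: "finite B" "vs.independent B" "vs.span B = UNIV"
  obtains C where "C > 0" "\<And>v b. b \<in> B \<Longrightarrow> cmod (vs.representation B v b) \<le> C * vnorm v"
proof -
  obtain m where m: "m > 0"
    and lower: "\<And>c. (\<Sum>b\<in>B. cmod (c b)) = 1 \<Longrightarrow> m \<le> vnorm (\<Sum>b\<in>B. smul (c b) b)"
    using vnorm_lincomb_bounded_below[OF B(1,2)] by blast
  have "cmod (vs.representation B v b) \<le> (1 / m) * vnorm v" if b: "b \<in> B" for v b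
  proof -
    define s where "s = (\<Sum>b\<in>B. cmod (vs.representation B v b))"
    have "cmod (vs.representation B v b) \<le> s"
      unfolding s_def using b B(1) by (intro member_le_sum) auto
    moreover have "s \<le> vnorm v / m"
    proof (cases "s = 0")
      case True
      then show ?thesis using m vnorm_nonneg[of v] by simp
    next
      case False
      then have s: "s > 0" unfolding s_def by (simp add: order_less_le sum_nonneg)
      have "(\<Sum>b\<in>B. smul (vs.representation B v b / complex_of_real s) b)
          = smul (1 / complex_of_real s) (\<Sum>b\<in>B. smul (vs.representation B v b) b)"
        by (simp add: vs.scale_sum_right vs.scale_scale divide_inverse mult.commute)
      also have "\<dots> = smul (1 / complex_of_real s) v"
        using vs.sum_representation_eq[of B v B] B by simp
      finally have comb: "(\<Sum>b\<in>B. smul (vs.representation B v b / complex_of_real s) b)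
          = smul (1 / complex_of_real s) v" .
      have "(\<Sum>b\<in>B. cmod (vs.representation B v b / complex_of_real s)) = 1"
        using s by (simp add: norm_divide sum_divide_distrib[symmetric] s_def[symmetric])
      from lower[OF this] have "m \<le> vnorm (smul (1 / complex_of_real s) v)"
        unfolding comb .
      then show ?thesis using s m by (simp add: vnorm_scale norm_divide field_simps)
    qed
    ultimately show ?thesis using m by simp
  qed
  with m show thesis by (intro that[of "1 / m"]) auto
qed

lemma tnorm_coefficient_sigma_le:
  assumes B: "vs.independent B" "vs.span B = UNIV"
    and C: "0 \<le> C" "\<And>v b. b \<in> B \<Longrightarrow> cmod (vs.representation B v b) \<le> C * vnorm v"
    and f: "f ` {..<d} \<subseteq> B" and lam: "lam > 0" and y: "y \<in> mat_set k"
  shows "tnorm k (diag_sigma d (\<lambda>u i j. complex_of_real (1 / lam) * vs.representation B (y i j) (f u)))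
    \<le> real d * C * nrm k y / lam"
proof -
  have "tnorm k (diag_sigma d (\<lambda>u i j. complex_of_real (1 / lam) * vs.representation B (y i j) (f u)))
      \<le> (\<Sum>u<d. cmat_norm k k (\<lambda>i j. complex_of_real (1 / lam) * vs.representation B (y i j) (f u)))"
    by (rule tnorm_diag_sigma_le)
  also have "\<dots> \<le> (\<Sum>u<d. (1 / lam) * (C * nrm k y))"
  proof (intro sum_mono order_trans[OF cmat_norm_scale_le])
    fix u assume "u \<in> {..<d}"
    then have "cmat_norm k k (\<lambda>i j. vs.representation B (y i j) (f u)) \<le> C * nrm k y"
      using cmat_norm_functional_le[OF vs.linear_representation[OF B] C(2) C(1) y] f by auto
    then show "cmod (complex_of_real (1 / lam)) * cmat_norm k k (\<lambda>i j. vs.representation B (y i j) (f u))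
        \<le> 1 / lam * (C * nrm k y)"
      using lam by (intro mult_mono) (simp_all add: cmat_norm_nonneg norm_divide)
  qed
  also have "\<dots> = real d * C * nrm k y / lam"
    by simp
  finally show ?thesis .
qed

lemma slice_coefficient_sigma:
  assumes B: "finite B" "vs.independent B" "vs.span B = UNIV"
    and f: "bij_betw f {..<d} B" and lam: "lam \<noteq> 0" and y: "y \<in> mat_set k"
  shows "slice smul k d (diag_sigma d (\<lambda>u i j. complex_of_real (1 / lam) * vs.representation B (y i j) (f u)))
    (diag_mat d (\<lambda>u. smul (complex_of_real lam) (f u))) = y"
proof (intro ext)
  fix i j
  have "(\<Sum>u<d. smul (complex_of_real (1 / lam) * vs.representation B (y i j) (f u))
        (smul (complex_of_real lam) (f u))) = (\<Sum>b\<in>B. smul (vs.representation B (y i j) b) b)"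
    using lam sum.reindex_bij_betw[OF f, of "\<lambda>b. smul (vs.representation B (y i j) b) b"]
    by (simp add: vs.scale_scale)
  also have "\<dots> = y i j"
    using vs.sum_representation_eq[of B "y i j" B] B by simp
  finally show "slice smul k d (diag_sigma d (\<lambda>u i j. complex_of_real (1 / lam) * vs.representation B (y i j) (f u)))
      (diag_mat d (\<lambda>u. smul (complex_of_real lam) (f u))) i j = y i j"
    using y unfolding slice_diag_sigma_diag_mat[OF vs.vector_space_axioms]
    by (auto simp: mat_set_def)
qed

theorem op_compact_matrix_unit_ball:
  assumes "findim smul"
  shows "op_compact smul nrm (matrix_unit_ball nrm)"
proof -
  obtain B where B: "finite B" "vs.independent B" "vs.span B = UNIV"
    using ex_finite_basis[OF assms] .
  obtain C where C: "C > 0" "\<And>v b. b \<in> B \<Longrightarrow> cmod (vs.representation B v b) \<le> C * vnorm v"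
    using representation_bounded[OF B] by blast
  define d where "d = card B"
  obtain f where f: "bij_betw f {..<d} B"
    using ex_bij_betw_nat_finite[OF B(1)] by (auto simp: d_def lessThan_atLeast0)
  define lam where "lam = real d * C + 1"
  have lam: "lam > 0" "real d * C \<le> lam"
    using C(1) by (simp_all add: lam_def add_nonneg_pos)
  define x where "x = diag_mat d (\<lambda>u. smul (complex_of_real lam) (f u))"
  have "x \<in> KV nrm"
    unfolding x_def using mat_set_subset_KV diag_mat_in_mat_set by blast
  moreover have "y \<in> mclosure nrm k {slice smul k N \<sigma> x | N \<sigma>. fin_supp N \<sigma> \<and> tnorm k \<sigma> \<le> 1}"
    if y: "y \<in> matrix_unit_ball nrm k" for k y
  proof -
    have y_mat: "y \<in> mat_set k" and y1: "nrm k y \<le> 1"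
      using y by (auto simp: matrix_unit_ball_def)
    define \<sigma> where
      "\<sigma> = diag_sigma d (\<lambda>u i j. complex_of_real (1 / lam) * vs.representation B (y i j) (f u))"
    have "tnorm k \<sigma> \<le> real d * C * nrm k y / lam"
      unfolding \<sigma>_def using B(2,3) C f lam(1) y_mat
      by (intro tnorm_coefficient_sigma_le) (auto simp: bij_betw_def)
    also have "\<dots> \<le> 1"
    proof -
      have "real d * C * nrm k y \<le> lam"
        using mult_left_le[OF y1, of "real d * C"] C(1) lam(2) by simp
      with lam(1) show ?thesis by simp
    qed
    finally have "tnorm k \<sigma> \<le> 1" .
    moreover have "slice smul k d \<sigma> x = y"
      unfolding \<sigma>_def x_def using B f lam(1) y_mat by (intro slice_coefficient_sigma) auto
    moreover have "fin_supp d \<sigma>"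
      unfolding \<sigma>_def by (rule fin_supp_diag_sigma)
    ultimately have "y \<in> {slice smul k N \<sigma> x | N \<sigma>. fin_supp N \<sigma> \<and> tnorm k \<sigma> \<le> 1}"
      by blast
    then show ?thesis using y_mat by (rule mem_mclosureI)
  qed
  ultimately show ?thesis
    unfolding op_compact_def using mclosure_matrix_unit_ball
    by (auto simp: matrix_unit_ball_def)
qed

end

theorem corollary6p2:
  fixes smul :: "complex \<Rightarrow> 'v::ab_group_add \<Rightarrow> 'v"
    and nrm :: "nat \<Rightarrow> (nat \<Rightarrow> nat \<Rightarrow> 'v) \<Rightarrow> real"
  assumes "operator_space smul nrm"
    and "findim smul"
  shows "op_compact smul nrm (matrix_unit_ball nrm)"
proof -
  interpret op_space smul nrm by (rule op_space.intro) fact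
  show ?thesis using \<open>findim smul\<close> by (rule op_compact_matrix_unit_ball)
qed

end
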